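(* In the setting below, for every $k$ with $\operatorname{Im}\lambda(k)\ge 0$ one has $\psi(x,k)=\begin{pmatrix}0&1\\1&0\end{pmatrix}\phi(-x,k)$. Moreover, if $k_0$ satisfies $\operatorname{Im}\lambda(k_0)>0$ and $\phi(x,k_0)=b_0\,\psi(x,k_0)$ for all $x$ with a constant $b_0$, then $b_0^2=1$, i.e. $b_0=\pm1$.
   Context: Setting: $q:\mathbb{R}\to\mathbb{C}$ with $q(x)\to q_\pm=q_0e^{i\theta_\pm}$ as $x\to\pm\infty$, $q_0>0$, $\theta_++\theta_-\equiv\pi\pmod{2\pi}$, $q-q_\pm$ integrable at $\pm\infty$. Scattering problem (nonlocal Sine-Gordon, $\sigma=-1$): $v_x=\begin{pmatrix}-ik&q(x)\\ -q(-x)&ik\end{pmatrix}v$, $\lambda=\sqrt{k^2-q_0^2}$. Jost solutions: $\phi(x,k)\sim(\lambda+k,-iq_+)^Te^{-i\lambda x}$ as $x\to-\infty$, $\psi(x,k)\sim(-iq_+,\lambda+k)^Te^{i\lambda x}$ as $x\to+\infty$. *)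

theory Defs
  imports "HOL-Analysis.Analysis"
begin

text \<open>Right-hand side of the nonlocal (sigma = -1) scattering problem
  v_x = [[-ik, q(x)], [-q(-x), ik]] v, with v = (v1, v2).\<close>
definition zs_rhs :: "(real \<Rightarrow> complex) \<Rightarrow> complex \<Rightarrow> real \<Rightarrow> complex \<times> complex \<Rightarrow> complex \<times> complex" where
  "zs_rhs q k x v = (- \<i> * k * fst v + q x * snd v, - q (- x) * fst v + \<i> * k * snd v)"

definition solves_zs :: "(real \<Rightarrow> complex) \<Rightarrow> complex \<Rightarrow> (real \<Rightarrow> complex \<times> complex) \<Rightarrow> bool" where
  "solves_zs q k v \<longleftrightarrow> (\<forall>x. (v has_vector_derivative zs_rhs q k x (v x)) (at x))"

definition jost_phi :: "(real \<Rightarrow> complex) \<Rightarrow> complex \<Rightarrow> complex \<Rightarrow> complex \<Rightarrow> (real \<Rightarrow> complex \<times> complex) \<Rightarrow> bool" where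
  "jost_phi q qp k lam v \<longleftrightarrow> solves_zs q k v \<and>
     ((\<lambda>x. (exp (\<i> * lam * of_real x) * fst (v x), exp (\<i> * lam * of_real x) * snd (v x)))
        \<longlongrightarrow> (lam + k, - \<i> * qp)) at_bot"

definition jost_psi :: "(real \<Rightarrow> complex) \<Rightarrow> complex \<Rightarrow> complex \<Rightarrow> complex \<Rightarrow> (real \<Rightarrow> complex \<times> complex) \<Rightarrow> bool" where
  "jost_psi q qp k lam v \<longleftrightarrow> solves_zs q k v \<and>
     ((\<lambda>x. (exp (- \<i> * lam * of_real x) * fst (v x), exp (- \<i> * lam * of_real x) * snd (v x)))
        \<longlongrightarrow> (- \<i> * qp, lam + k)) at_top"

end

theory Submission
  imports Defs
begin

text \<open>Reflecting \<open>x \<mapsto> -x\<close> and swapping the two components maps solutions of the nonlocal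
  problem to solutions, and maps \<open>\<phi>\<close> to a solution with exactly the asymptotics at \<open>+\<infinity>\<close>
  that characterise \<open>\<psi>\<close>. So the first claim is the uniqueness of \<open>\<psi>\<close> when \<open>Im \<lambda> \<ge> 0\<close>.
  The Wronskian of two such solutions is constant and equals \<open>e\<^sup>2\<^sup>i\<^sup>\<lambda>\<^sup>x\<close> times a quantity
  tending to zero, so it vanishes; hence the solutions are proportional where the first
  component of one of them does not vanish, i.e. near \<open>+\<infinity>\<close>, and the normalisation fixes the
  factor to be 1. Their difference then vanishes at a point, hence everywhere, by a
  Gronwall-type argument using only local integrability of \<open>q\<close>. Applying the symmetry twice
  gives \<open>\<psi>\<^sub>1(x) = b\<^sub>0 \<psi>\<^sub>2(-x) = b\<^sub>0\<^sup>2 \<psi>\<^sub>1(x)\<close>, and \<open>\<psi>\<^sub>1\<close> does not vanish for large \<open>x\<close>.\<close>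

lemma integral_centred_interval_small:
  fixes g :: "real \<Rightarrow> real"
  assumes g_int: "\<And>a b. g integrable_on {a..b}" and "e > 0"
  obtains \<delta> where "\<delta> > 0" "integral {t0 - \<delta>..t0 + \<delta>} g < e"
proof -
  define F where "F t = integral {t0 - 1..t} g" for t
  have "continuous_on {t0 - 1..t0 + 1} F"
    unfolding F_def by (rule indefinite_integral_continuous_1[OF g_int])
  then have "isCont F t0"
    by (rule continuous_on_interior) simp
  then obtain r where r: "r > 0" "\<And>t. dist t t0 < r \<Longrightarrow> dist (F t) (F t0) < e / 2"
    unfolding continuous_at_eps_delta using \<open>e > 0\<close> by (metis half_gt_zero)
  define \<delta> where "\<delta> = min (r / 2) (1 / 2)"
  have \<delta>: "\<delta> > 0" "\<delta> < r" "\<delta> < 1"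
    using r(1) by (auto simp: \<delta>_def)
  have "integral {t0 - \<delta>..t0 + \<delta>} g = F (t0 + \<delta>) - F (t0 - \<delta>)"
    using Henstock_Kurzweil_Integration.integral_combine[OF _ _ g_int,
        of "t0 - 1" "t0 - \<delta>" "t0 + \<delta>"] \<delta>
    by (simp add: F_def algebra_simps)
  also have "\<dots> < e"
    using r(2)[of "t0 + \<delta>"] r(2)[of "t0 - \<delta>"] \<delta> unfolding dist_real_def by arith
  finally show ?thesis
    using \<delta>(1) that by blast
qed

lemma linear_bound_vanishing_near:
  fixes d :: "real \<Rightarrow> 'a::banach"
  assumes deriv: "\<And>t. (d has_vector_derivative d' t) (at t)"
    and bound: "\<And>t. norm (d' t) \<le> g t * norm (d t)"
    and g_int: "\<And>a b. g integrable_on {a..b}" and g_nonneg: "\<And>t. 0 \<le> g t"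
    and zero: "d t0 = 0"
  obtains \<delta> where "\<delta> > 0" "\<And>t. t \<in> {t0 - \<delta>..t0 + \<delta>} \<Longrightarrow> d t = 0"
proof -
  obtain \<delta> where \<delta>: "\<delta> > 0" "integral {t0 - \<delta>..t0 + \<delta>} g < 1"
    using integral_centred_interval_small[OF g_int] by (metis zero_less_one)
  define I where "I = {t0 - \<delta>..t0 + \<delta>}"
  have "continuous_on I d"
    using deriv by (intro continuous_at_imp_continuous_on ballI has_vector_derivative_continuous)
  then have "\<exists>s\<in>I. \<forall>t\<in>I. norm (d t) \<le> norm (d s)"
    using \<delta>(1) by (intro continuous_attains_sup continuous_on_norm) (auto simp: I_def)
  then obtain s where "s \<in> I" and s_max: "\<And>t. t \<in> I \<Longrightarrow> norm (d t) \<le> norm (d s)"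
    by blast
  define m where "m = norm (d s)"
  have increment: "norm (d b - d a) \<le> m * integral I g" if "a \<le> b" "a \<in> I" "b \<in> I" for a b
  proof -
    have sub: "{a..b} \<subseteq> I"
      using that by (auto simp: I_def)
    have ftc: "(d' has_integral (d b - d a)) {a..b}"
      using \<open>a \<le> b\<close>
      by (intro fundamental_theorem_of_calculus) (auto intro: has_vector_derivative_at_within deriv)
    have "norm (d b - d a) \<le> integral {a..b} (\<lambda>t. m * g t)"
      unfolding integral_unique[OF ftc, symmetric]
    proof (rule integral_norm_bound_integral)
      show "d' integrable_on {a..b}"
        using ftc by blast
      show "(\<lambda>t. m * g t) integrable_on {a..b}"
        using integrable_on_cmult_left[OF g_int, of m] by simp
      show "norm (d' t) \<le> m * g t" if "t \<in> {a..b}" for t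
      proof -
        have "norm (d' t) \<le> g t * norm (d t)"
          by (rule bound)
        also have "\<dots> \<le> g t * m"
          using s_max[of t] sub that g_nonneg[of t] unfolding m_def by (intro mult_left_mono) auto
        finally show ?thesis
          by (simp add: mult.commute)
      qed
    qed
    also have "\<dots> \<le> m * integral I g"
      using sub g_int g_nonneg unfolding I_def m_def
      by (auto intro!: mult_left_mono integral_subset_le)
    finally show ?thesis .
  qed
  have "norm (d t) \<le> m * integral I g" if "t \<in> I" for t
    using increment[of t0 t] increment[of t t0] that zero \<delta>(1)
    by (cases "t0 \<le> t") (auto simp: I_def norm_minus_commute)
  then have "m \<le> m * integral I g"
    using \<open>s \<in> I\<close> m_def by blast
  then have "m = 0"
    using \<delta>(2) by (auto simp: I_def m_def mult_le_cancel_left1)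
  then show ?thesis
    using that[OF \<delta>(1)] s_max by (simp add: I_def m_def)
qed

lemma linear_bound_vanishing_unique:
  fixes d :: "real \<Rightarrow> 'a::banach"
  assumes deriv: "\<And>t. (d has_vector_derivative d' t) (at t)"
    and bound: "\<And>t. norm (d' t) \<le> g t * norm (d t)"
    and g_int: "\<And>a b. g integrable_on {a..b}" and g_nonneg: "\<And>t. 0 \<le> g t"
    and zero: "d t0 = 0"
  shows "d t = 0"
proof -
  have "closed {t. d t = 0}"
    using deriv by (intro closed_Collect_eq continuous_on_const continuous_at_imp_continuous_on
        ballI has_vector_derivative_continuous)
  moreover have "open {t. d t = 0}"
  proof (unfold open_contains_ball, intro ballI)
    fix t1 assume "t1 \<in> {t. d t = 0}"
    then obtain \<delta> where "\<delta> > 0" "\<And>t. t \<in> {t1 - \<delta>..t1 + \<delta>} \<Longrightarrow> d t = 0"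
      using linear_bound_vanishing_near[OF deriv bound g_int g_nonneg] by blast
    then show "\<exists>\<epsilon>>0. ball t1 \<epsilon> \<subseteq> {t. d t = 0}"
      by (intro exI[of _ \<delta>]) (auto simp: dist_real_def abs_less_iff)
  qed
  ultimately have "{t. d t = 0} = UNIV"
    using clopen[of "{t. d t = 0}"] zero by blast
  then show ?thesis
    by blast
qed

lemma solves_zs_fst_deriv:
  assumes "solves_zs q k v"
  shows "((\<lambda>x. fst (v x)) has_vector_derivative - \<i> * k * fst (v x) + q x * snd (v x)) (at x)"
  using has_derivative_fst[OF assms[unfolded solves_zs_def has_vector_derivative_def, rule_format, of x]]
  by (simp add: has_vector_derivative_def zs_rhs_def)

lemma solves_zs_snd_deriv:
  assumes "solves_zs q k v"
  shows "((\<lambda>x. snd (v x)) has_vector_derivative - q (- x) * fst (v x) + \<i> * k * snd (v x)) (at x)"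
  using has_derivative_snd[OF assms[unfolded solves_zs_def has_vector_derivative_def, rule_format, of x]]
  by (simp add: has_vector_derivative_def zs_rhs_def)

lemma solves_zs_diff:
  assumes v: "solves_zs q k v" and z: "solves_zs q k z"
  shows "solves_zs q k (\<lambda>x. v x - z x)"
  unfolding solves_zs_def
proof
  fix x
  show "((\<lambda>x. v x - z x) has_vector_derivative zs_rhs q k x (v x - z x)) (at x)"
    using has_vector_derivative_diff[OF v[unfolded solves_zs_def, rule_format, of x]
        z[unfolded solves_zs_def, rule_format, of x]]
    by (simp add: zs_rhs_def algebra_simps)
qed

text \<open>The nonlocal symmetry: the coefficient \<open>-q(-x)\<close> turns into \<open>q(x)\<close> under reflection.\<close>
lemma solves_zs_reflect:
  assumes v: "solves_zs q k v"
  shows "solves_zs q k (\<lambda>x. (snd (v (- x)), fst (v (- x))))"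
  unfolding solves_zs_def
proof
  fix x :: real
  have minus: "(uminus has_vector_derivative (-1::real)) (at x)"
    by (auto simp: has_vector_derivative_def intro!: derivative_eq_intros)
  have "((\<lambda>x. snd (v (- x))) has_vector_derivative
      - (- q x * fst (v (- x)) + \<i> * k * snd (v (- x)))) (at x)"
    using vector_diff_chain_at[OF minus solves_zs_snd_deriv[OF v, of "- x"]] by (simp add: o_def)
  moreover have "((\<lambda>x. fst (v (- x))) has_vector_derivative
      - (- \<i> * k * fst (v (- x)) + q (- x) * snd (v (- x)))) (at x)"
    using vector_diff_chain_at[OF minus solves_zs_fst_deriv[OF v, of "- x"]] by (simp add: o_def)
  ultimately show "((\<lambda>x. (snd (v (- x)), fst (v (- x)))) has_vector_derivative
      zs_rhs q k x (snd (v (- x)), fst (v (- x)))) (at x)"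
    by (simp add: zs_rhs_def has_vector_derivative_Pair)
qed

definition wronskian ::
    "(real \<Rightarrow> complex \<times> complex) \<Rightarrow> (real \<Rightarrow> complex \<times> complex) \<Rightarrow> real \<Rightarrow> complex" where
  "wronskian v z x = fst (v x) * snd (z x) - snd (v x) * fst (z x)"

text \<open>Abel's identity for the trace-free coefficient matrix.\<close>
lemma wronskian_constant:
  assumes v: "solves_zs q k v" and z: "solves_zs q k z"
  obtains c where "\<And>x. wronskian v z x = c"
proof -
  have "(wronskian v z has_vector_derivative 0) (at x within UNIV)" for x
  proof -
    have "(wronskian v z has_vector_derivative
        fst (v x) * (- q (- x) * fst (z x) + \<i> * k * snd (z x))
          + (- \<i> * k * fst (v x) + q x * snd (v x)) * snd (z x)
        - (snd (v x) * (- \<i> * k * fst (z x) + q x * snd (z x))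
          + (- q (- x) * fst (v x) + \<i> * k * snd (v x)) * fst (z x))) (at x)"
      unfolding wronskian_def[abs_def]
      by (intro has_vector_derivative_diff has_vector_derivative_mult
          solves_zs_fst_deriv solves_zs_snd_deriv v z)
    then show ?thesis
      by (simp add: algebra_simps)
  qed
  then obtain c where "\<And>x. x \<in> UNIV \<Longrightarrow> wronskian v z x = c"
    by (rule has_vector_derivative_zero_constant[OF convex_UNIV]) blast
  then show ?thesis
    using that by blast
qed

lemma zs_rhs_norm_le:
  "norm (zs_rhs q k t v) \<le> (2 * norm k + norm (q t) + norm (q (- t))) * norm v"
proof -
  have f: "norm (fst v) \<le> norm v" and s: "norm (snd v) \<le> norm v"
    using norm_fst_le[of "fst v" "snd v"] norm_snd_le[of "snd v" "fst v"] by simp_all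
  have "norm (zs_rhs q k t v)
      \<le> norm (- \<i> * k * fst v + q t * snd v) + norm (- q (- t) * fst v + \<i> * k * snd v)"
    unfolding zs_rhs_def by (rule norm_Pair_le)
  also have "\<dots> \<le> (norm k * norm (fst v) + norm (q t) * norm (snd v))
      + (norm (q (- t)) * norm (fst v) + norm k * norm (snd v))"
    by (intro add_mono norm_triangle_le) (auto simp: norm_mult)
  also have "\<dots> \<le> (norm k * norm v + norm (q t) * norm v) + (norm (q (- t)) * norm v + norm k * norm v)"
    by (intro add_mono mult_left_mono f s) auto
  finally show ?thesis
    by (simp add: algebra_simps)
qed

lemma solves_zs_vanishing_unique:
  assumes sol: "solves_zs q k d" and q_int: "\<And>a b. (\<lambda>t. norm (q t)) integrable_on {a..b}"
    and "d x0 = 0"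
  shows "d x = 0"
proof (rule linear_bound_vanishing_unique)
  show "(d has_vector_derivative zs_rhs q k t (d t)) (at t)" for t
    using sol unfolding solves_zs_def by blast
  show "norm (zs_rhs q k t (d t)) \<le> (2 * norm k + norm (q t) + norm (q (- t))) * norm (d t)" for t
    by (rule zs_rhs_norm_le)
  show "(\<lambda>t. 2 * norm k + norm (q t) + norm (q (- t))) integrable_on {a..b}" for a b
  proof -
    have "(\<lambda>t. norm (q (- t))) integrable_on {a..b}"
      using Henstock_Kurzweil_Integration.integrable_reflect_real[of "\<lambda>t. norm (q t)" "- a" "- b"]
        q_int[of "- b" "- a"] by simp
    then show ?thesis
      by (intro integrable_add q_int integrable_const_ivl)
  qed
qed (use \<open>d x0 = 0\<close> in auto)

lemma solves_zs_proportional: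
  assumes v: "solves_zs q k v" and z: "solves_zs q k z" and W: "\<And>x. wronskian v z x = 0"
    and nz: "\<And>x. x \<ge> R \<Longrightarrow> fst (v x) \<noteq> 0"
  obtains c where "\<And>x. x \<ge> R \<Longrightarrow> z x = (c * fst (v x), c * snd (v x))"
proof -
  have deriv_ratio: "((\<lambda>x. fst (z x) * inverse (fst (v x))) has_vector_derivative 0) (at x within {R..})"
    if "x \<in> {R..}" for x
  proof -
    have v1: "fst (v x) \<noteq> 0"
      using nz that by auto
    have "((\<lambda>x. inverse (fst (v x))) has_vector_derivative
        (- \<i> * k * fst (v x) + q x * snd (v x)) * - (inverse (fst (v x)) ^ 2)) (at x)"
      using field_vector_diff_chain_at[OF solves_zs_fst_deriv[OF v, of x] DERIV_inverse[OF v1]]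
      by (simp add: o_def power2_eq_square)
    from has_vector_derivative_mult[OF solves_zs_fst_deriv[OF z] this]
    have "((\<lambda>x. fst (z x) * inverse (fst (v x))) has_vector_derivative
        fst (z x) * ((- \<i> * k * fst (v x) + q x * snd (v x)) * - (inverse (fst (v x)) ^ 2))
        + (- \<i> * k * fst (z x) + q x * snd (z x)) * inverse (fst (v x))) (at x)" .
    moreover have "fst (z x) * ((- \<i> * k * fst (v x) + q x * snd (v x)) * - (inverse (fst (v x)) ^ 2))
        + (- \<i> * k * fst (z x) + q x * snd (z x)) * inverse (fst (v x))
        = q x * wronskian v z x / fst (v x) ^ 2"
      using v1 by (simp add: wronskian_def field_simps power2_eq_square)
    ultimately show ?thesis
      using W[of x] by (simp add: has_vector_derivative_at_within)
  qed
  obtain c where c: "\<And>x. x \<in> {R..} \<Longrightarrow> fst (z x) * inverse (fst (v x)) = c"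
    using has_vector_derivative_zero_constant[OF convex_real_interval(1),
        of R "\<lambda>x. fst (z x) * inverse (fst (v x))"] deriv_ratio
    by metis
  show ?thesis
  proof (rule that)
    fix x assume "x \<ge> R"
    then have v1: "fst (v x) \<noteq> 0"
      by (rule nz)
    then have z1: "fst (z x) = c * fst (v x)"
      using c[of x] \<open>x \<ge> R\<close> by (auto simp: field_simps)
    then have "fst (v x) * (snd (z x) - c * snd (v x)) = 0"
      using W[of x] by (simp add: wronskian_def algebra_simps)
    then have "snd (z x) = c * snd (v x)"
      using v1 by simp
    with z1 show "z x = (c * fst (v x), c * snd (v x))"
      by (simp add: prod_eq_iff)
  qed
qed

lemma jost_phi_reflect:
  assumes "jost_phi q qp k lam phi"
  shows "jost_psi q qp k lam (\<lambda>x. (snd (phi (- x)), fst (phi (- x))))"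
proof -
  have "((\<lambda>x. (exp (\<i> * lam * of_real x) * fst (phi x), exp (\<i> * lam * of_real x) * snd (phi x)))
      \<longlongrightarrow> (lam + k, - \<i> * qp)) at_bot"
    using assms unfolding jost_phi_def by blast
  from filterlim_compose[OF this filterlim_uminus_at_bot_at_top]
  have L: "((\<lambda>x. (exp (- \<i> * lam * of_real x) * fst (phi (- x)),
        exp (- \<i> * lam * of_real x) * snd (phi (- x)))) \<longlongrightarrow> (lam + k, - \<i> * qp)) at_top"
    by (simp add: o_def)
  show ?thesis
    using assms tendsto_Pair[OF tendsto_snd[OF L] tendsto_fst[OF L]]
    unfolding jost_phi_def jost_psi_def by (simp add: solves_zs_reflect)
qed

lemma jost_psi_fst_tendsto:
  assumes "jost_psi q qp k lam v"
  shows "((\<lambda>x. exp (- \<i> * lam * of_real x) * fst (v x)) \<longlongrightarrow> - \<i> * qp) at_top"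
  using tendsto_fst[of _ _ at_top] assms unfolding jost_psi_def by fastforce

lemma jost_psi_snd_tendsto:
  assumes "jost_psi q qp k lam v"
  shows "((\<lambda>x. exp (- \<i> * lam * of_real x) * snd (v x)) \<longlongrightarrow> lam + k) at_top"
  using tendsto_snd[of _ _ at_top] assms unfolding jost_psi_def by fastforce

lemma jost_psi_fst_eventually_nonzero:
  assumes "jost_psi q qp k lam v" and "qp \<noteq> 0"
  shows "eventually (\<lambda>x. fst (v x) \<noteq> 0) at_top"
proof -
  have "eventually (\<lambda>x. exp (- \<i> * lam * of_real x) * fst (v x) \<noteq> 0) at_top"
    using tendsto_imp_eventually_ne[OF jost_psi_fst_tendsto[OF assms(1)], of 0] assms(2) by simp
  then show ?thesis
    by eventually_elim simp
qed

lemma jost_psi_wronskian_zero: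
  assumes "Im lam \<ge> 0" and v: "jost_psi q qp k lam v" and z: "jost_psi q qp k lam z"
  shows "wronskian v z x = 0"
proof -
  define E where "E x = exp (- \<i> * lam * of_real x)" for x
  obtain c where c: "\<And>x. wronskian v z x = c"
    using wronskian_constant v z unfolding jost_psi_def by metis
  have "E x * fst (v x) * (E x * snd (z x)) - E x * snd (v x) * (E x * fst (z x)) = E x * E x * c" for x
    using c[of x] by (simp add: wronskian_def algebra_simps)
  moreover have "((\<lambda>x. E x * fst (v x) * (E x * snd (z x)) - E x * snd (v x) * (E x * fst (z x)))
      \<longlongrightarrow> - \<i> * qp * (lam + k) - (lam + k) * (- \<i> * qp)) at_top"
    unfolding E_def
    by (rule tendsto_diff[OF tendsto_mult[OF jost_psi_fst_tendsto[OF v] jost_psi_snd_tendsto[OF z]]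
          tendsto_mult[OF jost_psi_snd_tendsto[OF v] jost_psi_fst_tendsto[OF z]]])
  ultimately have "((\<lambda>x. E x * E x * c) \<longlongrightarrow> 0) at_top"
    by simp
  moreover have "eventually (\<lambda>x. norm c \<le> norm (E x * E x * c)) at_top"
  proof (rule eventually_at_top_linorderI)
    fix x :: real assume "x \<ge> 0"
    then have "norm (E x) \<ge> 1"
      using assms(1) by (simp add: E_def)
    then have "1 \<le> norm (E x * E x)"
      using mult_mono[of 1 "norm (E x)" 1 "norm (E x)"] by (simp add: norm_mult)
    from mult_right_mono[OF this norm_ge_zero[of c]]
    show "norm c \<le> norm (E x * E x * c)"
      by (simp add: norm_mult)
  qed
  ultimately have "norm c \<le> 0"
    using tendsto_lowerbound[OF tendsto_norm] by fastforce
  then show ?thesis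
    using c by simp
qed

lemma jost_psi_unique:
  assumes q_int: "\<And>a b. (\<lambda>t. norm (q t)) integrable_on {a..b}"
    and "Im lam \<ge> 0" and "qp \<noteq> 0"
    and v: "jost_psi q qp k lam v" and z: "jost_psi q qp k lam z"
  shows "z x = v x"
proof -
  have sol_v: "solves_zs q k v" and sol_z: "solves_zs q k z"
    using v z unfolding jost_psi_def by blast+
  obtain R where R: "\<And>x. x \<ge> R \<Longrightarrow> fst (v x) \<noteq> 0"
    using jost_psi_fst_eventually_nonzero[OF v \<open>qp \<noteq> 0\<close>] by (auto simp: eventually_at_top_linorder)
  obtain c where c: "\<And>x. x \<ge> R \<Longrightarrow> z x = (c * fst (v x), c * snd (v x))"
    using solves_zs_proportional[OF sol_v sol_z jost_psi_wronskian_zero[OF \<open>Im lam \<ge> 0\<close> v z] R]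
    by blast
  have "((\<lambda>x. exp (- \<i> * lam * of_real x) * fst (z x)) \<longlongrightarrow> c * (- \<i> * qp)) at_top"
  proof (rule Lim_transform_eventually)
    show "((\<lambda>x. c * (exp (- \<i> * lam * of_real x) * fst (v x))) \<longlongrightarrow> c * (- \<i> * qp)) at_top"
      by (intro tendsto_mult tendsto_const jost_psi_fst_tendsto[OF v])
    show "eventually (\<lambda>x. c * (exp (- \<i> * lam * of_real x) * fst (v x))
        = exp (- \<i> * lam * of_real x) * fst (z x)) at_top"
      using c by (intro eventually_at_top_linorderI[of R]) simp
  qed
  then have "c * (- \<i> * qp) = - \<i> * qp"
    using tendsto_unique[OF _ _ jost_psi_fst_tendsto[OF z]] by fastforce
  then have "c = 1"
    using \<open>qp \<noteq> 0\<close> by simp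
  then have "z R - v R = 0"
    using c[of R] by (simp add: prod_eq_iff)
  then have "z x - v x = 0"
    using solves_zs_vanishing_unique[OF solves_zs_diff[OF sol_z sol_v] q_int] by blast
  then show ?thesis
    by simp
qed

lemma norm_integrable_on_interval:
  fixes q :: "real \<Rightarrow> complex"
  assumes "(\<lambda>x. q x - qp) absolutely_integrable_on {0..}"
    and "(\<lambda>x. q x - qm) absolutely_integrable_on {..0}"
  shows "(\<lambda>t. norm (q t)) integrable_on {a..b}"
proof -
  have "(\<lambda>x. (q x - qp) + qp) absolutely_integrable_on {0..b}"
    by (intro set_integral_add(1) set_integrable_subset[OF assms(1)]) auto
  moreover have "(\<lambda>x. (q x - qm) + qm) absolutely_integrable_on {a..0}"
    by (intro set_integral_add(1) set_integrable_subset[OF assms(2)]) auto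
  ultimately have "q absolutely_integrable_on ({a..0} \<union> {0..b})"
    by (intro absolutely_integrable_Un) simp_all
  then have "q absolutely_integrable_on {a..b}"
    by (rule set_integrable_subset) auto
  then show ?thesis
    unfolding absolutely_integrable_on_def by simp
qed

theorem mainTheorem8:
  fixes q :: "real \<Rightarrow> complex" and q0 :: real and thp thmi :: real
  defines "qp \<equiv> of_real q0 * exp (\<i> * of_real thp)"
      and "qm \<equiv> of_real q0 * exp (\<i> * of_real thmi)"
  assumes q0: "q0 > 0"
    and theta: "\<exists>n::int. thp + thmi = pi + 2 * pi * of_int n"
    and lim_p: "(q \<longlongrightarrow> qp) at_top"
    and lim_m: "(q \<longlongrightarrow> qm) at_bot"
    and int_p: "(\<lambda>x. q x - qp) absolutely_integrable_on {0..}"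
    and int_m: "(\<lambda>x. q x - qm) absolutely_integrable_on {..0}"
  shows "(\<forall>k lam phi psi. lam\<^sup>2 = k\<^sup>2 - (of_real q0)\<^sup>2 \<and> Im lam \<ge> 0 \<and> lam \<noteq> 0 \<and>
            jost_phi q qp k lam phi \<and> jost_psi q qp k lam psi \<longrightarrow>
            (\<forall>x. psi x = (snd (phi (- x)), fst (phi (- x)))))
       \<and> (\<forall>k0 lam0 phi psi b0. lam0\<^sup>2 = k0\<^sup>2 - (of_real q0)\<^sup>2 \<and> Im lam0 > 0 \<and>
            jost_phi q qp k0 lam0 phi \<and> jost_psi q qp k0 lam0 psi \<and>
            (\<forall>x. phi x = (b0 * fst (psi x), b0 * snd (psi x))) \<longrightarrow> b0\<^sup>2 = 1)"
proof -
  have q_int: "\<And>a b. (\<lambda>t. norm (q t)) integrable_on {a..b}"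
    using norm_integrable_on_interval[OF int_p int_m] .
  have "qp \<noteq> 0"
    using q0 by (simp add: qp_def)
  have symmetry: "psi x = (snd (phi (- x)), fst (phi (- x)))"
    if "Im lam \<ge> 0" "jost_phi q qp k lam phi" "jost_psi q qp k lam psi" for k lam phi psi x
    using jost_psi_unique[OF q_int that(1) \<open>qp \<noteq> 0\<close> jost_phi_reflect[OF that(2)] that(3)] .
  have "b0\<^sup>2 = 1"
    if jost: "Im lam \<ge> 0" "jost_phi q qp k lam phi" "jost_psi q qp k lam psi"
      and b0: "\<forall>x. phi x = (b0 * fst (psi x), b0 * snd (psi x))" for k lam phi psi b0
  proof -
    obtain x where "fst (psi x) \<noteq> 0"
      using eventually_happens'[OF trivial_limit_at_top_linorder
          jost_psi_fst_eventually_nonzero[OF jost(3) \<open>qp \<noteq> 0\<close>]] by blast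
    have "fst (psi x) = b0 * snd (psi (- x))"
      using symmetry[OF jost, of x] b0 by simp
    also have "\<dots> = b0\<^sup>2 * fst (psi x)"
      using symmetry[OF jost, of "- x"] b0 by (simp add: power2_eq_square)
    finally show ?thesis
      using \<open>fst (psi x) \<noteq> 0\<close> by simp
  qed
  then show ?thesis
    using symmetry by (meson less_imp_le)
qed

end
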